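(* $\mathsf{HA}\vdash\mathsf{HA}^\exists$, i.e. every axiom of $\mathsf{HA}^\exists$ is provable in $\mathsf{HA}$. Consequently every formula provable in $\mathsf{HA}^\exists$ is provable in $\mathsf{HA}$.
   Context: $\mathsf{HA}$ is Heyting arithmetic: intuitionistic first-order arithmetic over $0,\mathsf{S},+,\cdot,=$ with the equality axioms, the successor axioms, the defining axioms for $+$ and $\cdot$, and the induction scheme $P(0)\wedge\forall\alpha(P(\alpha)\to P(\alpha+1))\to\forall\alpha P(\alpha)$ for all formulas $P$. The $\exists$-translation $F\mapsto F^\exists$ is: $F^\exists=F$ for atomic $F$; it commutes with $\wedge,\vee,\to,\exists$; and $(\forall xF)^\exists=\neg\exists x\neg F^\exists$. $\mathsf{HA}^\exists$ is the intuitionistic theory whose axioms are the $\exists$-translations of the axioms of $\mathsf{HA}$ (in particular, the translated induction axiom is $P(0)\wedge\neg\exists\alpha\neg(P(\alpha)\to P(\alpha+1))\to\neg\exists\alpha\neg P(\alpha)$). *)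

theory Defs
  imports Main
begin

section \<open>Syntax of first-order arithmetic (de Bruijn indices)\<close>

datatype tm = Var nat | Zero | S tm | Plus tm tm | Times tm tm

datatype fm = Eq tm tm | Bot | And fm fm | Or fm fm | Imp fm fm | All fm | Ex fm

definition Neg :: "fm \<Rightarrow> fm" where "Neg A = Imp A Bot"

fun lift_tm :: "nat \<Rightarrow> tm \<Rightarrow> tm" where
  "lift_tm k (Var i) = (if i < k then Var i else Var (Suc i))"
| "lift_tm k Zero = Zero"
| "lift_tm k (S t) = S (lift_tm k t)"
| "lift_tm k (Plus t u) = Plus (lift_tm k t) (lift_tm k u)"
| "lift_tm k (Times t u) = Times (lift_tm k t) (lift_tm k u)"

fun lift_fm :: "nat \<Rightarrow> fm \<Rightarrow> fm" where
  "lift_fm k (Eq t u) = Eq (lift_tm k t) (lift_tm k u)"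
| "lift_fm k Bot = Bot"
| "lift_fm k (And A B) = And (lift_fm k A) (lift_fm k B)"
| "lift_fm k (Or A B) = Or (lift_fm k A) (lift_fm k B)"
| "lift_fm k (Imp A B) = Imp (lift_fm k A) (lift_fm k B)"
| "lift_fm k (All A) = All (lift_fm (Suc k) A)"
| "lift_fm k (Ex A) = Ex (lift_fm (Suc k) A)"

fun subst_tm :: "nat \<Rightarrow> tm \<Rightarrow> tm \<Rightarrow> tm" where
  "subst_tm k u (Var i) = (if i < k then Var i else if i = k then u else Var (i - 1))"
| "subst_tm k u Zero = Zero"
| "subst_tm k u (S t) = S (subst_tm k u t)"
| "subst_tm k u (Plus t t') = Plus (subst_tm k u t) (subst_tm k u t')"
| "subst_tm k u (Times t t') = Times (subst_tm k u t) (subst_tm k u t')"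

fun subst_fm :: "nat \<Rightarrow> tm \<Rightarrow> fm \<Rightarrow> fm" where
  "subst_fm k u (Eq t t') = Eq (subst_tm k u t) (subst_tm k u t')"
| "subst_fm k u Bot = Bot"
| "subst_fm k u (And A B) = And (subst_fm k u A) (subst_fm k u B)"
| "subst_fm k u (Or A B) = Or (subst_fm k u A) (subst_fm k u B)"
| "subst_fm k u (Imp A B) = Imp (subst_fm k u A) (subst_fm k u B)"
| "subst_fm k u (All A) = All (subst_fm (Suc k) (lift_tm 0 u) A)"
| "subst_fm k u (Ex A) = Ex (subst_fm (Suc k) (lift_tm 0 u) A)"

abbreviation inst :: "fm \<Rightarrow> tm \<Rightarrow> fm" where "inst A t \<equiv> subst_fm 0 t A"

text \<open>For a formula \<open>P\<close> with distinguished variable 0 (= \<alpha>), the formula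
  \<open>P(\<alpha>+1)\<close>, i.e. variable 0 replaced by \<open>S (Var 0)\<close>, all other variables unchanged.\<close>
definition succ_inst :: "fm \<Rightarrow> fm" where
  "succ_inst P = subst_fm 0 (S (Var 0)) (lift_fm 1 P)"

inductive deriv :: "fm set \<Rightarrow> fm list \<Rightarrow> fm \<Rightarrow> bool" where
  Axiom: "A \<in> Ax \<Longrightarrow> deriv Ax \<Gamma> A"
| Assum: "A \<in> set \<Gamma> \<Longrightarrow> deriv Ax \<Gamma> A"
| BotE: "deriv Ax \<Gamma> Bot \<Longrightarrow> deriv Ax \<Gamma> A"
| AndI: "deriv Ax \<Gamma> A \<Longrightarrow> deriv Ax \<Gamma> B \<Longrightarrow> deriv Ax \<Gamma> (And A B)"
| AndE1: "deriv Ax \<Gamma> (And A B) \<Longrightarrow> deriv Ax \<Gamma> A"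
| AndE2: "deriv Ax \<Gamma> (And A B) \<Longrightarrow> deriv Ax \<Gamma> B"
| OrI1: "deriv Ax \<Gamma> A \<Longrightarrow> deriv Ax \<Gamma> (Or A B)"
| OrI2: "deriv Ax \<Gamma> B \<Longrightarrow> deriv Ax \<Gamma> (Or A B)"
| OrE: "deriv Ax \<Gamma> (Or A B) \<Longrightarrow> deriv Ax (A # \<Gamma>) C \<Longrightarrow> deriv Ax (B # \<Gamma>) C
        \<Longrightarrow> deriv Ax \<Gamma> C"
| ImpI: "deriv Ax (A # \<Gamma>) B \<Longrightarrow> deriv Ax \<Gamma> (Imp A B)"
| ImpE: "deriv Ax \<Gamma> (Imp A B) \<Longrightarrow> deriv Ax \<Gamma> A \<Longrightarrow> deriv Ax \<Gamma> B"
| AllI: "deriv Ax (map (lift_fm 0) \<Gamma>) A \<Longrightarrow> deriv Ax \<Gamma> (All A)"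
| AllE: "deriv Ax \<Gamma> (All A) \<Longrightarrow> deriv Ax \<Gamma> (inst A t)"
| ExI: "deriv Ax \<Gamma> (inst A t) \<Longrightarrow> deriv Ax \<Gamma> (Ex A)"
| ExE: "deriv Ax \<Gamma> (Ex A) \<Longrightarrow> deriv Ax (A # map (lift_fm 0) \<Gamma>) (lift_fm 0 B)
        \<Longrightarrow> deriv Ax \<Gamma> B"

text \<open>Provability in the theory with axiom set \<open>Ax\<close> (free variables of axioms are
  schematic, i.e. implicitly universally quantified).\<close>
definition provable :: "fm set \<Rightarrow> fm \<Rightarrow> bool" where
  "provable Ax A \<longleftrightarrow> deriv Ax [] A"

abbreviation "x \<equiv> Var 0"
abbreviation "y \<equiv> Var 1"
abbreviation "z \<equiv> Var 2"

definition equality_axioms :: "fm set" where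
  "equality_axioms =
    { Eq x x,
      Imp (Eq x y) (Eq y x),
      Imp (Eq x y) (Imp (Eq y z) (Eq x z)),
      Imp (Eq x y) (Eq (S x) (S y)),
      Imp (Eq x y) (Eq (Plus x z) (Plus y z)),
      Imp (Eq x y) (Eq (Plus z x) (Plus z y)),
      Imp (Eq x y) (Eq (Times x z) (Times y z)),
      Imp (Eq x y) (Eq (Times z x) (Times z y)) }"

definition successor_axioms :: "fm set" where
  "successor_axioms = { Neg (Eq (S x) Zero), Imp (Eq (S x) (S y)) (Eq x y) }"

definition arith_axioms :: "fm set" where
  "arith_axioms =
    { Eq (Plus x Zero) x,
      Eq (Plus x (S y)) (S (Plus x y)),
      Eq (Times x Zero) Zero,
      Eq (Times x (S y)) (Plus (Times x y) x) }"

definition induction_axiom :: "fm \<Rightarrow> fm" where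
  "induction_axiom P = Imp (And (inst P Zero) (All (Imp P (succ_inst P)))) (All P)"

definition HA_axioms :: "fm set" where
  "HA_axioms = equality_axioms \<union> successor_axioms \<union> arith_axioms
               \<union> range induction_axiom"

fun ex_tr :: "fm \<Rightarrow> fm" where
  "ex_tr (Eq t u) = Eq t u"
| "ex_tr Bot = Bot"
| "ex_tr (And A B) = And (ex_tr A) (ex_tr B)"
| "ex_tr (Or A B) = Or (ex_tr A) (ex_tr B)"
| "ex_tr (Imp A B) = Imp (ex_tr A) (ex_tr B)"
| "ex_tr (Ex A) = Ex (ex_tr A)"
| "ex_tr (All A) = Neg (Ex (Neg (ex_tr A)))"

definition HAex_axioms :: "fm set" where
  "HAex_axioms = ex_tr ` HA_axioms"

end

theory Submission
  imports Defs
begin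

text \<open>The axioms of \<open>HA\<close> other than induction contain no \<open>\<forall>\<close>, so they are their own
  \<open>\<exists>\<close>-translations. The translated induction axiom for \<open>P\<close> follows from the
  induction axiom for \<open>\<not>\<not>P\<close>: \<open>\<not>\<exists>\<alpha>\<not>(P(\<alpha>) \<rightarrow> P(\<alpha>+1))\<close> gives
  \<open>\<forall>\<alpha>\<not>\<not>(P(\<alpha>) \<rightarrow> P(\<alpha>+1))\<close> and hence \<open>\<forall>\<alpha>(\<not>\<not>P(\<alpha>) \<rightarrow> \<not>\<not>P(\<alpha>+1))\<close>, while
  \<open>P(0)\<close> gives \<open>\<not>\<not>P(0)\<close>; so \<open>\<forall>\<alpha>\<not>\<not>P(\<alpha>)\<close>, which refutes \<open>\<exists>\<alpha>\<not>P(\<alpha>)\<close>.\<close>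

lemma subst_tm_lift_tm_Var: "subst_tm k (Var k) (lift_tm (Suc k) t) = t"
  by (induction t) auto

lemma subst_fm_lift_fm_Var: "subst_fm k (Var k) (lift_fm (Suc k) A) = A"
  by (induction A arbitrary: k) (auto simp: subst_tm_lift_tm_Var)

lemma ex_tr_lift_fm: "ex_tr (lift_fm k A) = lift_fm k (ex_tr A)"
  by (induction A arbitrary: k) (auto simp: Neg_def)

lemma ex_tr_subst_fm: "ex_tr (subst_fm k u A) = subst_fm k u (ex_tr A)"
  by (induction A arbitrary: k u) (auto simp: Neg_def)

lemma ex_tr_succ_inst: "ex_tr (succ_inst A) = succ_inst (ex_tr A)"
  by (simp add: succ_inst_def ex_tr_subst_fm ex_tr_lift_fm)

lemma succ_inst_Neg: "succ_inst (Neg A) = Neg (succ_inst A)"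
  by (simp add: succ_inst_def Neg_def)

lemma ex_tr_induction_axiom:
  "ex_tr (induction_axiom P) =
     Imp (And (inst (ex_tr P) Zero) (Neg (Ex (Neg (Imp (ex_tr P) (succ_inst (ex_tr P)))))))
         (Neg (Ex (Neg (ex_tr P))))"
  by (simp add: induction_axiom_def ex_tr_subst_fm ex_tr_succ_inst Neg_def)

lemma ex_tr_non_induction_axiom:
  "A \<in> equality_axioms \<union> successor_axioms \<union> arith_axioms \<Longrightarrow> ex_tr A = A"
  unfolding equality_axioms_def successor_axioms_def arith_axioms_def by (auto simp: Neg_def)

lemma deriv_weaken: "deriv Ax \<Gamma> A \<Longrightarrow> set \<Gamma> \<subseteq> set \<Gamma>' \<Longrightarrow> deriv Ax \<Gamma>' A"
proof (induction arbitrary: \<Gamma>' rule: deriv.induct)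
  case (OrE Ax \<Gamma> A B C)
  then show ?case by (metis deriv.OrE insert_mono list.set(2))
next
  case (ImpI Ax A \<Gamma> B)
  then show ?case by (metis deriv.ImpI insert_mono list.set(2))
next
  case (AllI Ax \<Gamma> A)
  then show ?case by (metis deriv.AllI image_mono list.set_map)
next
  case (ExE Ax \<Gamma> A B)
  have "set (A # map (lift_fm 0) \<Gamma>) \<subseteq> set (A # map (lift_fm 0) \<Gamma>')"
    using ExE.prems by auto
  then show ?case using ExE by (metis deriv.ExE)
qed (auto intro: deriv.intros)

lemma deriv_cut_axioms:
  assumes "deriv Ax \<Gamma> A" and "\<And>B. B \<in> Ax \<Longrightarrow> deriv Ax' [] B"
  shows "deriv Ax' \<Gamma> A"
  using assms
proof (induction rule: deriv.induct)
  case (Axiom A Ax \<Gamma>)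
  then show ?case using deriv_weaken by fastforce
qed (auto intro: deriv.intros)

lemma deriv_NegI: "deriv Ax (A # \<Gamma>) Bot \<Longrightarrow> deriv Ax \<Gamma> (Neg A)"
  unfolding Neg_def by (rule ImpI)

lemma deriv_NegE: "deriv Ax \<Gamma> (Neg A) \<Longrightarrow> deriv Ax \<Gamma> A \<Longrightarrow> deriv Ax \<Gamma> Bot"
  unfolding Neg_def by (rule ImpE)

lemma deriv_not_not_intro: "deriv Ax \<Gamma> (Imp A (Neg (Neg A)))"
  by (intro ImpI deriv_NegI, rule deriv_NegE) (auto intro: Assum)

lemma deriv_not_not_mp:
  "deriv Ax \<Gamma> (Imp (Neg (Neg (Imp A B))) (Imp (Neg (Neg A)) (Neg (Neg B))))"
proof (intro ImpI deriv_NegI)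
  let ?\<Delta> = "Neg B # Neg (Neg A) # Neg (Neg (Imp A B)) # \<Gamma>"
  have "deriv Ax (Imp A B # A # ?\<Delta>) Bot"
    by (rule deriv_NegE[of _ _ B], rule Assum, simp, rule ImpE[of _ _ A]) (auto intro: Assum)
  then have "deriv Ax (A # ?\<Delta>) (Neg (Imp A B))"
    by (rule deriv_NegI)
  then have "deriv Ax (A # ?\<Delta>) Bot"
    by (rule deriv_NegE[rotated]) (auto intro: Assum)
  then have "deriv Ax ?\<Delta> (Neg A)"
    by (rule deriv_NegI)
  then show "deriv Ax ?\<Delta> Bot"
    by (rule deriv_NegE[rotated]) (auto intro: Assum)
qed

text \<open>In the quantifier rules below, the lifted body instantiated at the fresh variable \<open>Var 0\<close>
  is the original body again (\<open>subst_fm_lift_fm_Var\<close>).\<close>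

lemma deriv_All_mono:
  assumes "\<And>\<Delta>. deriv Ax \<Delta> (Imp A B)"
  shows "deriv Ax \<Gamma> (Imp (All A) (All B))"
proof (intro ImpI AllI)
  let ?\<Delta> = "map (lift_fm 0) (All A # \<Gamma>)"
  have "deriv Ax ?\<Delta> (All (lift_fm 1 A))"
    by (rule Assum) simp
  then have "deriv Ax ?\<Delta> A"
    using AllE[of Ax ?\<Delta> "lift_fm 1 A" "Var 0"] by (simp add: subst_fm_lift_fm_Var)
  then show "deriv Ax ?\<Delta> B"
    by (rule ImpE[OF assms])
qed

lemma deriv_not_ex_not_imp_all_not_not:
  "deriv Ax \<Gamma> (Imp (Neg (Ex (Neg A))) (All (Neg (Neg A))))"
proof (intro ImpI AllI deriv_NegI)
  let ?\<Delta> = "Neg A # map (lift_fm 0) (Neg (Ex (Neg A)) # \<Gamma>)"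
  have "deriv Ax ?\<Delta> (Neg (Ex (Neg (lift_fm 1 A))))"
    by (rule Assum) (simp add: Neg_def)
  moreover have "deriv Ax ?\<Delta> (Ex (Neg (lift_fm 1 A)))"
    using ExI[where A = "Neg (lift_fm 1 A)" and t = "Var 0"]
    by (simp add: Neg_def subst_fm_lift_fm_Var Assum)
  ultimately show "deriv Ax ?\<Delta> Bot"
    by (rule deriv_NegE)
qed

lemma deriv_all_not_not_imp_not_ex_not:
  "deriv Ax \<Gamma> (Imp (All (Neg (Neg A))) (Neg (Ex (Neg A))))"
proof (intro ImpI deriv_NegI)
  let ?\<Gamma> = "Ex (Neg A) # All (Neg (Neg A)) # \<Gamma>"
  let ?\<Delta> = "Neg A # map (lift_fm 0) ?\<Gamma>"
  have "deriv Ax ?\<Delta> (All (Neg (Neg (lift_fm 1 A))))"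
    by (rule Assum) (simp add: Neg_def)
  then have "deriv Ax ?\<Delta> (Neg (Neg A))"
    using AllE[of Ax ?\<Delta> "Neg (Neg (lift_fm 1 A))" "Var 0"]
    by (simp add: Neg_def subst_fm_lift_fm_Var)
  then have "deriv Ax ?\<Delta> (lift_fm 0 Bot)"
    by (simp add: deriv_NegE Assum)
  then show "deriv Ax ?\<Gamma> Bot"
    by (rule ExE[rotated]) (simp add: Assum)
qed

lemma deriv_HA_induction_axiom: "deriv HA_axioms \<Gamma> (induction_axiom P)"
  by (rule Axiom) (simp add: HA_axioms_def)

lemma deriv_HA_ex_tr_induction:
  "deriv HA_axioms \<Gamma>
     (Imp (And (inst Q Zero) (Neg (Ex (Neg (Imp Q (succ_inst Q))))))
          (Neg (Ex (Neg Q))))"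
proof (rule ImpI)
  let ?\<Delta> = "And (inst Q Zero) (Neg (Ex (Neg (Imp Q (succ_inst Q))))) # \<Gamma>"
  let ?NN = "\<lambda>A. Neg (Neg A)"
  have hyp: "deriv HA_axioms ?\<Delta> (And (inst Q Zero) (Neg (Ex (Neg (Imp Q (succ_inst Q))))))"
    by (rule Assum) simp
  have base: "deriv HA_axioms ?\<Delta> (inst (?NN Q) Zero)"
    using ImpE[OF deriv_not_not_intro AndE1[OF hyp]] by (simp add: Neg_def)
  have "deriv HA_axioms ?\<Delta> (All (?NN (Imp Q (succ_inst Q))))"
    by (rule ImpE[OF deriv_not_ex_not_imp_all_not_not AndE2[OF hyp]])
  then have step: "deriv HA_axioms ?\<Delta> (All (Imp (?NN Q) (succ_inst (?NN Q))))"
    unfolding succ_inst_Neg by (rule ImpE[OF deriv_All_mono[OF deriv_not_not_mp]])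
  have "deriv HA_axioms ?\<Delta> (All (?NN Q))"
    using deriv_HA_induction_axiom[of ?\<Delta> "?NN Q"] base step
    unfolding induction_axiom_def by (blast intro: ImpE AndI)
  then show "deriv HA_axioms ?\<Delta> (Neg (Ex (Neg Q)))"
    by (rule ImpE[OF deriv_all_not_not_imp_not_ex_not])
qed

lemma deriv_HA_HAex_axiom: "A \<in> HAex_axioms \<Longrightarrow> deriv HA_axioms \<Gamma> A"
proof -
  assume "A \<in> HAex_axioms"
  then obtain B where B: "B \<in> HA_axioms" "A = ex_tr B"
    unfolding HAex_axioms_def by auto
  show ?thesis
  proof (cases "B \<in> range induction_axiom")
    case True
    then show ?thesis
      using B deriv_HA_ex_tr_induction by (auto simp: ex_tr_induction_axiom)
  next
    case False
    then have "ex_tr B = B"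
      using B ex_tr_non_induction_axiom unfolding HA_axioms_def by blast
    then show ?thesis
      using B by (simp add: Axiom)
  qed
qed

theorem mainTheorem9:
  shows "(\<forall>A \<in> HAex_axioms. provable HA_axioms A)
       \<and> (\<forall>A. provable HAex_axioms A \<longrightarrow> provable HA_axioms A)"
  unfolding provable_def using deriv_HA_HAex_axiom deriv_cut_axioms by blast

end
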